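(* For any flats $A,B,C$ in a proaffine regular liner $X$: if $A$ is subparallel to $B$ and $B$ is subparallel to $C$, then $A$ is subparallel to $C$; and if $A\parallel B$ and $B\parallel C$, then $A\parallel C$.
   Context: A liner is a set $X$ of points with a family of subsets called lines such that any two distinct points lie in a unique line and every line contains at least two points. For distinct $x,y$, $\overline{xy}$ is the line through them and $\overline{xx}:=\{x\}$. A set is flat if it contains $\overline{xy}$ for all its distinct points; $\overline A$ is the smallest flat containing $A$. For $A\subseteq X$, $y\in X$ put $\overline{Ay}=\bigcup_{a\in A}\overline{ay}$. $X$ is proaffine if for all $o,x,y\in X$ and $p\in\overline{xy}\setminus\overline{ox}$ there exists $u\in\overline{oy}$ such that $\overline{vp}\cap\overline{ox}\ne\varnothing$ for every $v\in\overline{oy}\setminus\{u\}$. $X$ is regular if for every flat $A$ and points $a\in A$, $b\in X\setminus A$, $\overline{A\cup\{b\}}=\bigcup_{y\in\overline{ab}}\overline{Ay}$. A flat $A$ is subparallel to a flat $B$ if $A\subseteq\overline{\{a\}\cup B}$ for every $a\in A$; flats $A,B$ are parallel, $A\parallel B$, if $A$ is subparallel to $B$ and $B$ is subparallel to $A$. *)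

theory Defs
  imports Main
begin

definition liner :: "'a set \<Rightarrow> 'a set set \<Rightarrow> bool" where
  "liner X L \<longleftrightarrow>
     (\<forall>l\<in>L. l \<subseteq> X \<and> (\<exists>x y. x \<noteq> y \<and> x \<in> l \<and> y \<in> l)) \<and>
     (\<forall>x\<in>X. \<forall>y\<in>X. x \<noteq> y \<longrightarrow> (\<exists>!l. l \<in> L \<and> x \<in> l \<and> y \<in> l))"

definition lineThrough :: "'a set set \<Rightarrow> 'a \<Rightarrow> 'a \<Rightarrow> 'a set" where
  "lineThrough L x y = (if x = y then {x} else (THE l. l \<in> L \<and> x \<in> l \<and> y \<in> l))"

definition flat :: "'a set \<Rightarrow> 'a set set \<Rightarrow> 'a set \<Rightarrow> bool" where
  "flat X L A \<longleftrightarrow> A \<subseteq> X \<and> (\<forall>x\<in>A. \<forall>y\<in>A. lineThrough L x y \<subseteq> A)"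

definition flat_hull :: "'a set \<Rightarrow> 'a set set \<Rightarrow> 'a set \<Rightarrow> 'a set" where
  "flat_hull X L A = \<Inter>{F. flat X L F \<and> A \<subseteq> F}"

definition cone :: "'a set set \<Rightarrow> 'a set \<Rightarrow> 'a \<Rightarrow> 'a set" where
  "cone L A y = (\<Union>a\<in>A. lineThrough L a y)"

definition proaffine :: "'a set \<Rightarrow> 'a set set \<Rightarrow> bool" where
  "proaffine X L \<longleftrightarrow>
     (\<forall>o'\<in>X. \<forall>x\<in>X. \<forall>y\<in>X. \<forall>p \<in> lineThrough L x y - lineThrough L o' x.
        \<exists>u \<in> lineThrough L o' y. \<forall>v \<in> lineThrough L o' y - {u}.
          lineThrough L v p \<inter> lineThrough L o' x \<noteq> {})"

definition regular :: "'a set \<Rightarrow> 'a set set \<Rightarrow> bool" where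
  "regular X L \<longleftrightarrow>
     (\<forall>A. flat X L A \<longrightarrow> (\<forall>a\<in>A. \<forall>b \<in> X - A.
        flat_hull X L (A \<union> {b}) = (\<Union>y \<in> lineThrough L a b. cone L A y)))"

definition subparallel :: "'a set \<Rightarrow> 'a set set \<Rightarrow> 'a set \<Rightarrow> 'a set \<Rightarrow> bool" where
  "subparallel X L A B \<longleftrightarrow> (\<forall>a\<in>A. A \<subseteq> flat_hull X L ({a} \<union> B))"

definition parallel :: "'a set \<Rightarrow> 'a set set \<Rightarrow> 'a set \<Rightarrow> 'a set \<Rightarrow> bool" where
  "parallel X L A B \<longleftrightarrow> subparallel X L A B \<and> subparallel X L B A"

end

theory Submission
  imports Defs
begin

text \<open>
  Subparallelism of flats reduces to lines: if a flat A is subparallel to a disjoint flat B, then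
  regularity puts every line a x of A into the plane spanned by a and some line of B through any
  prescribed point b of B. For lines A, D, E with A \<inter> D = D \<inter> E = {}, A in the plane of D and a,
  and D in the plane of E and b, either a lies in the plane of D and E, and then Playfair's axiom
  in that plane forces A = E or A \<inter> E = {}; or the planes of D, a and of E, a meet in a line through
  a missing D, which by Playfair's axiom is A. Playfair's axiom is where proaffinity enters;
  regularity provides the exchange property of flat hulls that makes planes behave as planes.
\<close>

lemma proaffine_disjoint_unique:
  assumes "proaffine X L" and "o' \<in> X" "x \<in> X" "y \<in> X"
    and "p \<in> lineThrough L x y - lineThrough L o' x"
    and "v \<in> lineThrough L o' y" "lineThrough L v p \<inter> lineThrough L o' x = {}"
    and "w \<in> lineThrough L o' y" "lineThrough L w p \<inter> lineThrough L o' x = {}"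
  shows "v = w"
proof -
  obtain u where "\<forall>v' \<in> lineThrough L o' y - {u}. lineThrough L v' p \<inter> lineThrough L o' x \<noteq> {}"
    using assms(1-5) unfolding proaffine_def by blast
  then show ?thesis using assms(6-9) by blast
qed

locale liner_space =
  fixes X :: "'a set" and L :: "'a set set"
  assumes liner: "liner X L"
begin

abbreviation line :: "'a \<Rightarrow> 'a \<Rightarrow> 'a set" where
  "line \<equiv> lineThrough L"

abbreviation hull :: "'a set \<Rightarrow> 'a set" where
  "hull \<equiv> flat_hull X L"

lemma line_two_points: "l \<in> L \<Longrightarrow> l \<subseteq> X \<and> (\<exists>u v. u \<noteq> v \<and> u \<in> l \<and> v \<in> l)"
  using liner unfolding liner_def by (elim conjE) (rule bspec)

lemma line_subset: "l \<in> L \<Longrightarrow> l \<subseteq> X"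
  using line_two_points by blast

lemma line_other_point:
  assumes "l \<in> L" "x \<in> l"
  obtains y where "y \<in> l" "y \<noteq> x"
  using line_two_points[OF assms(1)] by blast

lemma unique_line_through:
  assumes "x \<in> X" "y \<in> X" "x \<noteq> y"
  shows "\<exists>!l. l \<in> L \<and> x \<in> l \<and> y \<in> l"
proof -
  have "\<forall>x\<in>X. \<forall>y\<in>X. x \<noteq> y \<longrightarrow> (\<exists>!l. l \<in> L \<and> x \<in> l \<and> y \<in> l)"
    using liner unfolding liner_def by (rule conjunct2)
  then show ?thesis using assms by blast
qed

lemma lineThrough_refl [simp]: "line x x = {x}"
  unfolding lineThrough_def by simp

lemma lineThrough_eq_line:
  assumes "l \<in> L" "x \<in> l" "y \<in> l" "x \<noteq> y"
  shows "line x y = l"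
proof -
  have "\<exists>!l. l \<in> L \<and> x \<in> l \<and> y \<in> l"
    using assms line_subset by (intro unique_line_through) auto
  then have "(THE l. l \<in> L \<and> x \<in> l \<and> y \<in> l) = l"
    using assms by (intro the1_equality) simp_all
  then show ?thesis using assms(4) unfolding lineThrough_def by simp
qed

lemma lineThrough_in_L:
  assumes "x \<in> X" "y \<in> X" "x \<noteq> y"
  shows "line x y \<in> L" "x \<in> line x y" "y \<in> line x y"
proof -
  have "line x y \<in> L \<and> x \<in> line x y \<and> y \<in> line x y"
    using theI'[OF unique_line_through[OF assms]] assms(3) unfolding lineThrough_def by simp
  then show "line x y \<in> L" "x \<in> line x y" "y \<in> line x y" by auto
qed

lemma left_in_lineThrough: "x \<in> X \<Longrightarrow> y \<in> X \<Longrightarrow> x \<in> line x y"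
  using lineThrough_in_L(2) by (cases "x = y") simp_all

lemma right_in_lineThrough: "x \<in> X \<Longrightarrow> y \<in> X \<Longrightarrow> y \<in> line x y"
  using lineThrough_in_L(3) by (cases "x = y") simp_all

lemma lineThrough_subset: "x \<in> X \<Longrightarrow> y \<in> X \<Longrightarrow> line x y \<subseteq> X"
  using lineThrough_in_L(1) line_subset by (cases "x = y") simp_all

lemma lineThrough_commute:
  assumes "x \<in> X" "y \<in> X"
  shows "line x y = line y x"
proof (cases "x = y")
  case False
  then show ?thesis
    using lineThrough_eq_line[of "line x y" y x] lineThrough_in_L[OF assms False] by simp
qed simp

lemma lines_eqI:
  assumes "l \<in> L" "m \<in> L" "x \<in> l" "y \<in> l" "x \<in> m" "y \<in> m" "x \<noteq> y"
  shows "l = m"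
  using lineThrough_eq_line assms by metis

lemma lineThrough_eq:
  assumes "x \<in> X" "y \<in> X" "z \<in> line x y" "z \<noteq> x"
  shows "line x z = line x y"
proof -
  have "x \<noteq> y" using assms by (auto simp: lineThrough_def)
  then show ?thesis
    using lineThrough_eq_line lineThrough_in_L assms by metis
qed

lemma flat_line:
  assumes "l \<in> L"
  shows "flat X L l"
proof -
  have "line x y \<subseteq> l" if "x \<in> l" "y \<in> l" for x y
    using that lineThrough_eq_line[OF assms that] by (cases "x = y") simp_all
  then show ?thesis unfolding flat_def using line_subset[OF assms] by blast
qed

lemma flat_lineThrough:
  assumes "x \<in> X" "y \<in> X"
  shows "flat X L (line x y)"
proof (cases "x = y")
  case True
  then show ?thesis using assms unfolding flat_def by simp
next
  case False
  then show ?thesis using flat_line lineThrough_in_L assms by blast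
qed

lemma flat_subset: "flat X L F \<Longrightarrow> F \<subseteq> X"
  unfolding flat_def by blast

lemma flat_lineThrough_subset: "flat X L F \<Longrightarrow> x \<in> F \<Longrightarrow> y \<in> F \<Longrightarrow> line x y \<subseteq> F"
  unfolding flat_def by blast

lemma flat_line_subset:
  assumes "flat X L F" "l \<in> L" "x \<in> l" "y \<in> l" "x \<noteq> y" "x \<in> F" "y \<in> F"
  shows "l \<subseteq> F"
  using flat_lineThrough_subset[OF assms(1,6,7)] lineThrough_eq_line[OF assms(2-5)] by simp

lemma lineThrough_inter_flat:
  assumes "flat X L A" "a \<in> A" "b \<in> X" "b \<notin> A"
  shows "line a b \<inter> A = {a}"
proof -
  have aX: "a \<in> X" using assms(1,2) flat_subset by blast
  have "x = a" if "x \<in> line a b" "x \<in> A" for x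
  proof (rule ccontr)
    assume "x \<noteq> a"
    then have "line a x = line a b" using lineThrough_eq[OF aX assms(3) that(1)] by simp
    then show False
      using flat_lineThrough_subset[OF assms(1,2) that(2)] right_in_lineThrough[OF aX assms(3)] assms(4)
      by blast
  qed
  then show ?thesis using left_in_lineThrough[OF aX assms(3)] assms(2) by blast
qed

lemma hull_subset: "S \<subseteq> hull S"
  unfolding flat_hull_def by blast

lemma hull_least: "flat X L F \<Longrightarrow> S \<subseteq> F \<Longrightarrow> hull S \<subseteq> F"
  unfolding flat_hull_def by blast

lemma hull_mono: "S \<subseteq> T \<Longrightarrow> hull S \<subseteq> hull T"
  unfolding flat_hull_def by blast

lemma flat_hull:
  assumes "S \<subseteq> X"
  shows "flat X L (hull S)"
  unfolding flat_def
proof (intro conjI ballI)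
  have "flat X L X"
    unfolding flat_def using lineThrough_subset by simp
  then show "hull S \<subseteq> X" using hull_least assms by blast
  fix x y assume xy: "x \<in> hull S" "y \<in> hull S"
  have "line x y \<subseteq> F" if "flat X L F" "S \<subseteq> F" for F
  proof -
    have "x \<in> F" "y \<in> F" using xy hull_least[OF that] by auto
    then show ?thesis by (rule flat_lineThrough_subset[OF that(1)])
  qed
  then show "line x y \<subseteq> hull S"
    unfolding flat_hull_def by (intro Inter_greatest) simp
qed

lemma hull_of_flat: "flat X L F \<Longrightarrow> hull F = F"
  using hull_least hull_subset by blast

lemma hull_singleton: "x \<in> X \<Longrightarrow> hull {x} = {x}"
  by (rule hull_of_flat) (auto simp: flat_def lineThrough_def)

lemma hull_eqI:
  assumes "S \<subseteq> X" "T \<subseteq> X" "S \<subseteq> hull T" "T \<subseteq> hull S"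
  shows "hull S = hull T"
  using hull_least flat_hull assms by (meson subset_antisym)

lemma hull_subset_hullI: "T \<subseteq> X \<Longrightarrow> S \<subseteq> hull T \<Longrightarrow> hull S \<subseteq> hull T"
  using hull_least[OF flat_hull] .

lemma hull_subset_X: "S \<subseteq> X \<Longrightarrow> hull S \<subseteq> X"
  using flat_subset[OF flat_hull] .

lemma lineThrough_subset_hull:
  assumes "S \<subseteq> X" "x \<in> hull S" "y \<in> hull S"
  shows "line x y \<subseteq> hull S"
  using flat_lineThrough_subset[OF flat_hull[OF assms(1)] assms(2,3)] .

lemma hull_line_insert:
  assumes "x \<in> X" "y \<in> X" "z \<in> X"
  shows "hull (line x y \<union> {z}) = hull {x, y, z}"
proof (rule hull_eqI)
  have xyz: "{x, y, z} \<subseteq> X" using assms by simp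
  have "x \<in> hull {x, y, z}" "y \<in> hull {x, y, z}" "z \<in> hull {x, y, z}"
    using hull_subset[of "{x, y, z}"] by auto
  then show "line x y \<union> {z} \<subseteq> hull {x, y, z}"
    using flat_lineThrough_subset[OF flat_hull[OF xyz]] by simp
  have "x \<in> line x y" "y \<in> line x y"
    using left_in_lineThrough right_in_lineThrough assms by simp_all
  then show "{x, y, z} \<subseteq> hull (line x y \<union> {z})"
    using hull_subset[of "line x y \<union> {z}"] by auto
  show "line x y \<union> {z} \<subseteq> X" using lineThrough_subset assms by simp
  show "{x, y, z} \<subseteq> X" by (fact xyz)
qed

lemma hull_line_insert_swap:
  assumes "x \<in> X" "y \<in> X" "z \<in> X"
  shows "hull (line x y \<union> {z}) = hull (line x z \<union> {y})"
  using hull_line_insert assms by (simp add: insert_commute)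

lemma line_not_subset:
  assumes "l \<in> L" "m \<in> L" "l \<noteq> m"
  obtains x where "x \<in> l" "x \<notin> m"
proof -
  obtain u v where "u \<in> l" "v \<in> l" "u \<noteq> v"
    using line_two_points[OF assms(1)] by blast
  then show ?thesis using that lines_eqI[OF assms(1,2)] assms(3) by blast
qed

definition plane :: "'a set \<Rightarrow> bool" where
  "plane P \<longleftrightarrow> (\<exists>l\<in>L. \<exists>p\<in>X - l. P = hull (l \<union> {p}))"

lemma plane_hull_line_insert: "l \<in> L \<Longrightarrow> p \<in> X \<Longrightarrow> p \<notin> l \<Longrightarrow> plane (hull (l \<union> {p}))"
  unfolding plane_def by blast

lemma flat_plane:
  assumes "plane P"
  shows "flat X L P"
proof -
  obtain l p where "l \<in> L" "p \<in> X" "P = hull (l \<union> {p})"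
    using assms unfolding plane_def by blast
  then show ?thesis using flat_hull line_subset by simp
qed

lemma plane_subset: "plane P \<Longrightarrow> P \<subseteq> X"
  using flat_subset[OF flat_plane] .

lemma subparallel_disjoint_or_subset:
  assumes "flat X L B" "subparallel X L A B"
  shows "A \<subseteq> B \<or> A \<inter> B = {}"
proof (rule disjCI)
  assume "A \<inter> B \<noteq> {}"
  then obtain z where "z \<in> A" "z \<in> B" by blast
  then have "{z} \<union> B = B" by blast
  then show "A \<subseteq> B"
    using assms \<open>z \<in> A\<close> hull_of_flat[OF assms(1)] unfolding subparallel_def by metis
qed

end

locale regular_liner = liner_space +
  assumes regular: "regular X L"
begin

lemma mem_hull_insert_cone:
  assumes "flat X L F" "a \<in> F" "b \<in> X" "b \<notin> F" "z \<in> hull (F \<union> {b})"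
  obtains y f where "y \<in> line a b" "f \<in> F" "z \<in> line f y"
proof -
  have "hull (F \<union> {b}) = (\<Union>y \<in> line a b. cone L F y)"
    using regular assms(1-4) unfolding regular_def by blast
  then show ?thesis using that assms(5) unfolding cone_def by auto
qed

lemma hull_insert_exchange:
  assumes F: "flat X L F" and b: "b \<in> X" and z: "z \<in> hull (F \<union> {b})" "z \<notin> F"
  shows "b \<in> hull (F \<union> {z})"
proof -
  have FX: "F \<subseteq> X" using flat_subset[OF F] .
  have bF: "b \<notin> F"
    using z hull_of_flat[OF F] by (metis Un_absorb2 empty_subsetI insert_subset)
  have zX: "z \<in> X" using z(1) hull_subset_X[of "F \<union> {b}"] FX b by blast
  have FzX: "F \<union> {z} \<subseteq> X" using FX zX by blast
  have Fz: "F \<subseteq> hull (F \<union> {z})" "z \<in> hull (F \<union> {z})"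
    using hull_subset[of "F \<union> {z}"] by auto
  show ?thesis
  proof (cases "F = {}")
    case True
    then show ?thesis using z hull_singleton b by auto
  next
    case False
    then obtain a where a: "a \<in> F" by blast
    obtain y f where y: "y \<in> line a b" and f: "f \<in> F" and zf: "z \<in> line f y"
      using mem_hull_insert_cone[OF F a b bF z(1)] by blast
    have aX: "a \<in> X" and fX: "f \<in> X" using a f FX by auto
    have yX: "y \<in> X" using y lineThrough_subset[OF aX b] by blast
    have "z \<noteq> f" using z(2) f by blast
    then have "line f z = line f y" using lineThrough_eq[OF fX yX zf] by simp
    then have "y \<in> line f z" using right_in_lineThrough[OF fX yX] by simp
    then have yH: "y \<in> hull (F \<union> {z})"
      using lineThrough_subset_hull[OF FzX] Fz f by blast
    have "y \<notin> F" using flat_lineThrough_subset[OF F f] zf z(2) by blast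
    then have "line a y = line a b" using lineThrough_eq[OF aX b y] a by blast
    then have "b \<in> line a y" using right_in_lineThrough[OF aX b] by simp
    then show ?thesis using lineThrough_subset_hull[OF FzX] Fz a yH by blast
  qed
qed

lemma hull_insert_exchange_eq:
  assumes F: "flat X L F" and b: "b \<in> X" and z: "z \<in> hull (F \<union> {b})" "z \<notin> F"
  shows "hull (F \<union> {z}) = hull (F \<union> {b})"
proof (rule hull_eqI)
  have FX: "F \<subseteq> X" using flat_subset[OF F] .
  show "F \<union> {z} \<subseteq> X" "F \<union> {b} \<subseteq> X"
    using FX b z(1) hull_subset_X[of "F \<union> {b}"] by auto
  show "F \<union> {z} \<subseteq> hull (F \<union> {b})" "F \<union> {b} \<subseteq> hull (F \<union> {z})"
    using z hull_insert_exchange[OF assms] hull_subset[of "F \<union> {b}"] hull_subset[of "F \<union> {z}"]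
    by auto
qed

lemma hull_insert_subset_flat:
  assumes F: "flat X L F" and a: "a \<in> X" and R: "flat X L R" "F \<subseteq> R"
    and z: "z \<in> hull (F \<union> {a})" "z \<notin> F" "z \<in> R"
  shows "hull (F \<union> {a}) \<subseteq> R"
proof -
  have "hull (F \<union> {a}) = hull (F \<union> {z})" using hull_insert_exchange_eq[OF F a z(1,2)] by simp
  then show ?thesis using hull_least[OF R(1)] R(2) z(3) by simp
qed

lemma plane_spanned_by_line:
  assumes "plane P" and m: "m \<in> L" "m \<subseteq> P"
  obtains s where "s \<in> X" "s \<notin> m" "P = hull (m \<union> {s})"
proof -
  obtain l p where l: "l \<in> L" and p: "p \<in> X" "p \<notin> l" and P: "P = hull (l \<union> {p})"
    using assms(1) unfolding plane_def by blast
  show ?thesis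
  proof (cases "m = l")
    case True
    then show ?thesis using that p P by blast
  next
    case False
    obtain u where u: "u \<in> m" "u \<notin> l" using line_not_subset[OF m(1) l False] .
    obtain s where s: "s \<in> l" "s \<notin> m" using line_not_subset[OF l m(1)] False by metis
    obtain t where t: "t \<in> l" "t \<noteq> s" using line_other_point[OF l s(1)] .
    obtain v where v: "v \<in> m" "v \<noteq> u" using line_other_point[OF m(1) u(1)] .
    have X: "s \<in> X" "t \<in> X" "u \<in> X" "v \<in> X"
      using s t u v l m line_subset by blast+
    have "s \<noteq> u" using s u by blast
    then have su: "line s u \<in> L" "s \<in> line s u" "u \<in> line s u"
      using lineThrough_in_L X by blast+
    have l_eq: "l = line s t" using lineThrough_eq_line[OF l s(1) t(1)] t(2) by simp
    have m_eq: "m = line u v" using lineThrough_eq_line[OF m(1) u(1) v(1)] v(2) by simp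
    have "u \<in> P" using u(1) m(2) by blast
    then have "P = hull (l \<union> {u})"
      using P hull_insert_exchange_eq[OF flat_line[OF l] p(1), of u] u(2) by simp
    also have "\<dots> = hull (line s u \<union> {t})"
      using l_eq hull_line_insert_swap X by simp
    also have "\<dots> = hull (line s u \<union> {v})"
    proof (rule hull_insert_exchange_eq[OF flat_line[OF su(1)] X(2), symmetric])
      show "v \<in> hull (line s u \<union> {t})" using calculation v(1) m(2) by blast
      show "v \<notin> line s u" using lines_eqI[OF m(1) su(1) u(1) v(1) su(3)] v(2) s(2) su(2) by blast
    qed
    also have "\<dots> = hull (m \<union> {s})"
      using m_eq hull_line_insert X by (simp add: insert_commute)
    finally show ?thesis using that X(1) s(2) by blast
  qed
qed

lemma plane_eq_hull_line_insert:
  assumes "plane P" "m \<in> L" "m \<subseteq> P" "q \<in> P" "q \<notin> m"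
  shows "P = hull (m \<union> {q})"
proof -
  obtain s where s: "s \<in> X" "P = hull (m \<union> {s})"
    using plane_spanned_by_line assms(1-3) by blast
  then show ?thesis
    using hull_insert_exchange_eq[OF flat_line[OF assms(2)] s(1), of q] assms(4,5) by simp
qed

lemma hull_insert_meets_plane:
  assumes Q: "flat X L Q" "a \<in> Q" and b: "b \<in> X" "b \<notin> Q"
    and x: "x \<in> hull (Q \<union> {b})" "x \<notin> Q" "x \<notin> line a b"
  obtains q where "q \<in> Q" "q \<noteq> a" "q \<in> hull {a, b, x}"
proof -
  obtain y q where y: "y \<in> line a b" and q: "q \<in> Q" and xqy: "x \<in> line q y"
    using mem_hull_insert_cone[OF Q b x(1)] .
  have QX: "Q \<subseteq> X" using flat_subset[OF Q(1)] .
  have aX: "a \<in> X" and qX: "q \<in> X" using Q(2) q QX by blast+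
  have yX: "y \<in> X" using y lineThrough_subset[OF aX b(1)] by blast
  have "x \<in> X" using x(1) hull_subset_X[of "Q \<union> {b}"] QX b(1) by blast
  then have abx: "{a, b, x} \<subseteq> X" using aX b(1) by blast
  have "y \<noteq> a" using xqy flat_lineThrough_subset[OF Q(1) q Q(2)] x(2) by blast
  then have aby: "line a y = line a b" using lineThrough_eq[OF aX b(1) y] by simp
  have "x \<noteq> y" using y x(3) by blast
  then have "line y x = line y q"
    using lineThrough_eq[OF yX qX] xqy lineThrough_commute[OF qX yX] by simp
  then have "q \<in> line y x" using right_in_lineThrough[OF yX qX] by simp
  moreover have hull_abx: "a \<in> hull {a, b, x}" "b \<in> hull {a, b, x}" "x \<in> hull {a, b, x}"
    using hull_subset[of "{a, b, x}"] by blast+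
  then have "y \<in> hull {a, b, x}" using lineThrough_subset_hull[OF abx] y by blast
  then have "line y x \<subseteq> hull {a, b, x}" using lineThrough_subset_hull[OF abx] hull_abx(3) by blast
  moreover have "q \<noteq> a" using xqy aby x(3) by blast
  ultimately show ?thesis using that q by blast
qed

lemma plane_transversal:
  assumes P: "plane P" and A: "A \<in> L" "A \<subseteq> P" and E: "E \<in> L" "E \<subseteq> P" and "A \<noteq> E"
    and e: "e \<in> A" "e \<in> E" and d: "d \<in> P" "d \<notin> A" "d \<notin> E"
  obtains f y where "f \<in> A" "y \<in> E" "f \<noteq> e" "y \<noteq> e" "d \<in> line f y"
proof -
  obtain y1 where y1: "y1 \<in> E" "y1 \<noteq> e" using line_other_point[OF E(1) e(2)] .
  have "y1 \<notin> A" using lines_eqI[OF A(1) E(1) e(1) _ e(2) y1(1)] y1(2) \<open>A \<noteq> E\<close> by metis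
  then have "P = hull (A \<union> {y1})"
    using plane_eq_hull_line_insert[OF P A] y1(1) E(2) by blast
  then have "d \<in> hull (A \<union> {y1})" using d(1) by simp
  moreover have "y1 \<in> X" using y1(1) E(1) line_subset by blast
  ultimately obtain y f where y: "y \<in> line e y1" and f: "f \<in> A" and df: "d \<in> line f y"
    using mem_hull_insert_cone[OF flat_line[OF A(1)] e(1) _ \<open>y1 \<notin> A\<close>] by blast
  have yE: "y \<in> E" using y lineThrough_eq_line[OF E(1) e(2) y1(1)] y1(2) by simp
  have "f \<noteq> e" using df flat_lineThrough_subset[OF flat_line[OF E(1)] _ yE] e(2) d(3) by blast
  moreover have "y \<noteq> e" using df flat_lineThrough_subset[OF flat_line[OF A(1)] f] e(1) d(2) by blast
  ultimately show ?thesis using that f yE df by blast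
qed

text \<open>
  The plane of a, b, x meets Q = hull (E \<union> {a}) in a point q \<noteq> a, and the line a q misses D since
  a common point would put Q, hence a, into hull (E \<union> {b}).
\<close>
lemma noncoplanar_common_line:
  assumes A: "A \<in> L" "a \<in> A" "A \<subseteq> hull (D \<union> {a})" and D: "D \<in> L" "b \<in> D" "D \<subseteq> hull (E \<union> {b})"
    and E: "E \<in> L" and disj: "A \<inter> D = {}" "D \<inter> E = {}" and a: "a \<notin> hull (E \<union> {b})"
    and x: "x \<in> A" "x \<notin> hull (E \<union> {a})"
  obtains l where "l \<in> L" "a \<in> l" "l \<subseteq> hull (D \<union> {a})" "l \<subseteq> hull (E \<union> {a})" "l \<inter> D = {}"
proof -
  define P where "P = hull (D \<union> {a})"
  define Q where "Q = hull (E \<union> {a})"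
  define R where "R = hull (E \<union> {b})"
  have DX: "D \<subseteq> X" and EX: "E \<subseteq> X" using D(1) E line_subset by blast+
  have aX: "a \<in> X" and bX: "b \<in> X" using A(1,2) D(2) DX line_subset by blast+
  have flatP: "flat X L P" and flatQ: "flat X L Q" and flatR: "flat X L R"
    unfolding P_def Q_def R_def using flat_hull DX EX aX bX by simp_all
  have aQ: "a \<in> Q" and EQ: "E \<subseteq> Q" unfolding Q_def using hull_subset by blast+
  have DR: "D \<subseteq> R" and ER: "E \<subseteq> R" using D(3) unfolding R_def using hull_subset by blast+
  have aP: "a \<in> P" and DP: "D \<subseteq> P" unfolding P_def using hull_subset by blast+
  have Q_inter_R: "z \<notin> R" if "z \<in> Q" "z \<notin> E" for z
    using hull_insert_subset_flat[OF flat_line[OF E] aX flatR ER] that aQ a unfolding Q_def R_def by blast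
  have "b \<notin> Q" using Q_inter_R[of b] D(2) DR disj(2) by blast
  have "D \<union> {a} \<subseteq> hull (Q \<union> {b})"
    using DR hull_mono[of "E \<union> {b}" "Q \<union> {b}"] EQ aQ hull_subset[of "Q \<union> {b}"]
    unfolding R_def by blast
  then have "x \<in> hull (Q \<union> {b})"
    using hull_subset_hullI[of "Q \<union> {b}" "D \<union> {a}"] flat_subset[OF flatQ] bX x(1) A(3) by blast
  moreover have "x \<notin> line a b"
  proof -
    have "b \<notin> A" "x \<noteq> a" using D(2) disj(1) x(2) aQ unfolding Q_def by blast+
    then show ?thesis using lineThrough_inter_flat[OF flat_line[OF A(1)] A(2) bX] x(1) by blast
  qed
  ultimately obtain q where q: "q \<in> Q" "q \<noteq> a" "q \<in> hull {a, b, x}"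
    using hull_insert_meets_plane[OF flatQ aQ bX \<open>b \<notin> Q\<close>] x(2) unfolding Q_def by blast
  have "{a, b, x} \<subseteq> P" using A(3) x(1) aP D(2) DP unfolding P_def by blast
  then have "q \<in> P" using hull_least[OF flatP] q(3) by blast
  have "q \<in> X" using q(1) flat_subset[OF flatQ] by blast
  then have l: "line a q \<in> L" "a \<in> line a q"
    using lineThrough_in_L[OF aX _ q(2)[symmetric]] by simp_all
  have lP: "line a q \<subseteq> P" using flat_lineThrough_subset[OF flatP aP \<open>q \<in> P\<close>] .
  have lQ: "line a q \<subseteq> Q" using flat_lineThrough_subset[OF flatQ aQ q(1)] .
  have "line a q \<inter> D = {}" using Q_inter_R lQ DR disj(2) by blast
  then show ?thesis using that l lP lQ unfolding P_def Q_def by blast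
qed

lemma subparallel_disjoint_line:
  assumes A: "flat X L A" "a \<in> A" "x \<in> A" "x \<noteq> a" and B: "flat X L B" "b \<in> B"
    and "subparallel X L A B" "A \<inter> B = {}"
  obtains l where "l \<in> L" "b \<in> l" "l \<subseteq> B" "line a x \<subseteq> hull (l \<union> {a})"
proof -
  have AX: "A \<subseteq> X" and BX: "B \<subseteq> X" using A(1) B(1) flat_subset by blast+
  have aX: "a \<in> X" and bX: "b \<in> X" using A(2) B(2) AX BX by blast+
  have "a \<notin> B" using A(2) \<open>A \<inter> B = {}\<close> by blast
  have "x \<in> hull (B \<union> {a})"
    using \<open>subparallel X L A B\<close> A(2,3) unfolding subparallel_def by (simp add: Un_commute subset_iff)
  then obtain y b' where y: "y \<in> line b a" and b': "b' \<in> B" and xb'y: "x \<in> line b' y"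
    using mem_hull_insert_cone[OF B aX \<open>a \<notin> B\<close>] by blast
  have yX: "y \<in> X" and b'X: "b' \<in> X" using y lineThrough_subset[OF bX aX] b' BX by blast+
  have "b' \<noteq> b"
  proof
    assume "b' = b"
    then have "x \<in> line a b"
      using xb'y flat_lineThrough_subset[OF flat_lineThrough[OF bX aX] left_in_lineThrough[OF bX aX] y]
        lineThrough_commute[OF aX bX] by blast
    then show False
      using lineThrough_inter_flat[OF A(1,2) bX] A(3,4) B(2) \<open>A \<inter> B = {}\<close> by blast
  qed
  then have l: "line b b' \<in> L" "b \<in> line b b'" "b' \<in> line b b'"
    using lineThrough_in_L[OF bX b'X] by metis+
  define K where "K = hull (line b b' \<union> {a})"
  have KX: "line b b' \<union> {a} \<subseteq> X" using l(1) line_subset aX by blast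
  have "b \<in> K" "b' \<in> K" "a \<in> K" using l(2,3) hull_subset unfolding K_def by blast+
  then have "y \<in> K" using lineThrough_subset_hull[OF KX, of b a] y unfolding K_def by blast
  then have "x \<in> K" using lineThrough_subset_hull[OF KX, of b' y] \<open>b' \<in> K\<close> xb'y unfolding K_def by blast
  then have "line a x \<subseteq> K" using lineThrough_subset_hull[OF KX] \<open>a \<in> K\<close> unfolding K_def by blast
  moreover have "line b b' \<subseteq> B" using flat_lineThrough_subset[OF B(1,2) b'] .
  ultimately show ?thesis using that l(1,2) unfolding K_def by blast
qed

end

locale proaffine_regular_liner = regular_liner +
  assumes proaffine: "proaffine X L"
begin

text \<open>
  If A \<noteq> E, a transversal through a point o' of D meets A and E in points f \<noteq> y, and a
  transversal through e meets the line M = f y in some m \<noteq> o' and D in w. Then f and y are two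
  points of the line o' m whose lines to e miss the line o' w, contradicting proaffinity.
\<close>
lemma coplanar_disjoint_lines_eq:
  assumes P: "plane P" and D: "D \<in> L" "D \<subseteq> P" and A: "A \<in> L" "A \<subseteq> P"
    and E: "E \<in> L" "E \<subseteq> P" and disj: "A \<inter> D = {}" "E \<inter> D = {}" and e: "e \<in> A" "e \<in> E"
  shows "A = E"
proof (rule ccontr)
  assume "A \<noteq> E"
  have PX: "P \<subseteq> X" and flatP: "flat X L P" using plane_subset flat_plane P by blast+
  obtain o' where o': "o' \<in> D" using line_two_points[OF D(1)] by blast
  have "o' \<in> P" "o' \<notin> A" "o' \<notin> E" using o' D(2) disj by blast+
  then obtain f y where "f \<in> A" "y \<in> E" "f \<noteq> e" "y \<noteq> e" and o'M: "o' \<in> line f y"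
    using plane_transversal[OF P A E \<open>A \<noteq> E\<close> e] by metis
  note f = \<open>f \<in> A\<close> \<open>f \<noteq> e\<close> and y = \<open>y \<in> E\<close> \<open>y \<noteq> e\<close>
  have X: "o' \<in> X" "f \<in> X" "y \<in> X" using o' f(1) y(1) D(2) A(2) E(2) PX by blast+
  have "f \<noteq> y" using lines_eqI[OF A(1) E(1) e(1) f(1) e(2)] y(1) f(2) \<open>A \<noteq> E\<close> by metis
  then have M: "line f y \<in> L" "f \<in> line f y" "y \<in> line f y"
    using lineThrough_in_L X(2,3) by blast+
  define M where "M = line f y"
  have "M \<subseteq> P" unfolding M_def
    using flat_line_subset[OF flatP M \<open>f \<noteq> y\<close>] f(1) y(1) A(2) E(2) by blast
  have "e \<notin> M"
  proof
    assume "e \<in> M"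
    then have "A = M" using lines_eqI[OF A(1) M(1) f(1) e(1) M(2)] f(2) unfolding M_def by simp
    then show False using lines_eqI[OF A(1) E(1) e(1) _ e(2) y(1)] M(3) y(2) \<open>A \<noteq> E\<close> unfolding M_def by blast
  qed
  moreover have "M \<noteq> D" using M(2) f(1) disj(1) unfolding M_def by blast
  moreover have "e \<in> P" "e \<notin> D" using e(1) A(2) disj(1) by blast+
  ultimately obtain m w where m: "m \<in> M" "m \<noteq> o'" and w: "w \<in> D" and emw: "e \<in> line m w"
    using plane_transversal[OF P M(1)[folded M_def] \<open>M \<subseteq> P\<close> D _ o'M[folded M_def] o'] by metis
  have mX: "m \<in> X" and wX: "w \<in> X" using m(1) w \<open>M \<subseteq> P\<close> D(2) PX by blast+
  have o'wD: "line o' w \<subseteq> D" using flat_lineThrough_subset[OF flat_line[OF D(1)] o' w] .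
  have "line o' m = M" using lineThrough_eq_line[OF M(1) o'M m(1)[unfolded M_def]] m(2) unfolding M_def by simp
  moreover have "e \<in> line w m - line o' w" using emw lineThrough_commute[OF mX wX] o'wD disj(1) e(1) by auto
  moreover have "line f e \<inter> line o' w = {}"
    using lineThrough_eq_line[OF A(1) f(1) e(1) f(2)] o'wD disj(1) by auto
  moreover have "line y e \<inter> line o' w = {}"
    using lineThrough_eq_line[OF E(1) y(1) e(2) y(2)] o'wD disj(2) by auto
  ultimately have "f = y"
    using proaffine_disjoint_unique[OF proaffine X(1) wX mX] M(2,3) unfolding M_def by blast
  then show False using \<open>f \<noteq> y\<close> by contradiction
qed

lemma coplanar_lines_subparallel:
  assumes P: "plane P" and D: "D \<in> L" "D \<subseteq> P" and A: "A \<in> L" "A \<subseteq> P" "a \<in> A"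
    and E: "E \<in> L" "E \<subseteq> P" and disj: "A \<inter> D = {}" "E \<inter> D = {}"
  shows "A \<subseteq> hull (E \<union> {a})"
proof (cases "A \<inter> E = {}")
  case True
  then have "P = hull (E \<union> {a})"
    using plane_eq_hull_line_insert[OF P E] A(2,3) by blast
  then show ?thesis using A(2) by simp
next
  case False
  then obtain e where "e \<in> A" "e \<in> E" by blast
  then have "A = E" using coplanar_disjoint_lines_eq[OF P D A(1,2) E disj] by blast
  then show ?thesis using hull_subset by blast
qed

lemma noncoplanar_lines_subparallel:
  assumes A: "A \<in> L" "a \<in> A" "A \<subseteq> hull (D \<union> {a})" and D: "D \<in> L" "b \<in> D" "D \<subseteq> hull (E \<union> {b})"
    and E: "E \<in> L" and disj: "A \<inter> D = {}" "D \<inter> E = {}" and a: "a \<notin> hull (E \<union> {b})"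
  shows "A \<subseteq> hull (E \<union> {a})"
proof
  fix x assume x: "x \<in> A"
  show "x \<in> hull (E \<union> {a})"
  proof (rule ccontr)
    assume "x \<notin> hull (E \<union> {a})"
    then obtain l where l: "l \<in> L" "a \<in> l" "l \<subseteq> hull (D \<union> {a})" "l \<subseteq> hull (E \<union> {a})" "l \<inter> D = {}"
      using noncoplanar_common_line[OF A D E disj a x] by blast
    have "a \<in> X" "a \<notin> D" using A(1,2) line_subset disj(1) by blast+
    then have "plane (hull (D \<union> {a}))" using plane_hull_line_insert[OF D(1)] by blast
    moreover have "D \<subseteq> hull (D \<union> {a})" using hull_subset by blast
    ultimately have "A = l" using coplanar_disjoint_lines_eq[OF _ D(1) _ A(1,3) l(1,3) disj(1) l(5) A(2) l(2)] by blast
    then show False using x l(4) \<open>x \<notin> hull (E \<union> {a})\<close> by blast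
  qed
qed

lemma lines_subparallel_trans:
  assumes A: "A \<in> L" "a \<in> A" "A \<subseteq> hull (D \<union> {a})" and D: "D \<in> L" "b \<in> D" "D \<subseteq> hull (E \<union> {b})"
    and E: "E \<in> L" and disj: "A \<inter> D = {}" "D \<inter> E = {}"
  shows "A \<subseteq> hull (E \<union> {a})"
proof (cases "a \<in> hull (E \<union> {b})")
  case True
  define R where "R = hull (E \<union> {b})"
  have "b \<in> X" "b \<notin> E" using D(1,2) line_subset disj(2) by blast+
  then have R: "plane R" "flat X L R" unfolding R_def using plane_hull_line_insert[OF E] flat_plane by blast+
  have "E \<subseteq> R" unfolding R_def using hull_subset by blast
  moreover have "D \<union> {a} \<subseteq> R" using D(3) True unfolding R_def by blast
  then have "A \<subseteq> R" using A(3) hull_least[OF R(2)] by blast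
  moreover have "E \<inter> D = {}" using disj(2) by blast
  ultimately show ?thesis
    using coplanar_lines_subparallel[OF R(1) D(1) _ A(1) _ A(2) E] \<open>D \<union> {a} \<subseteq> R\<close> disj(1) by blast
next
  case False
  then show ?thesis using noncoplanar_lines_subparallel[OF A D E disj] by blast
qed

lemma disjoint_subparallel_trans:
  assumes A: "flat X L A" "a \<in> A" "x \<in> A" "x \<noteq> a" and B: "flat X L B" "b \<in> B" and C: "flat X L C"
    and AB: "subparallel X L A B" "A \<inter> B = {}" and BC: "subparallel X L B C" "B \<inter> C = {}"
  shows "x \<in> hull ({a} \<union> C)"
proof -
  obtain l where l: "l \<in> L" "b \<in> l" "l \<subseteq> B" and axl: "line a x \<subseteq> hull (l \<union> {a})"
    using subparallel_disjoint_line[OF A B AB] .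
  obtain b' where b': "b' \<in> l" "b' \<noteq> b" using line_other_point[OF l(1,2)] .
  have "B \<subseteq> hull ({b} \<union> C)" using BC(1) B(2) unfolding subparallel_def by blast
  then have "C \<noteq> {}" using b' l(3) B(2) hull_singleton flat_subset[OF B(1)] by auto
  then obtain c where c: "c \<in> C" by blast
  have "b' \<in> B" using b'(1) l(3) by blast
  obtain m where m: "m \<in> L" "c \<in> m" "m \<subseteq> C" and bb'm: "line b b' \<subseteq> hull (m \<union> {b})"
    using subparallel_disjoint_line[OF B(1,2) \<open>b' \<in> B\<close> b'(2) C c BC] .
  have "line b b' = l" using lineThrough_eq_line[OF l(1,2) b'(1)] b'(2) by simp
  then have lm: "l \<subseteq> hull (m \<union> {b})" using bb'm by simp
  have "a \<in> X" "x \<in> X" using A(2,3) flat_subset[OF A(1)] by blast+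
  then have ax: "line a x \<in> L" "a \<in> line a x" "x \<in> line a x"
    using lineThrough_in_L A(4) by metis+
  have "line a x \<inter> l = {}" using flat_lineThrough_subset[OF A(1-3)] l(3) AB(2) by blast
  moreover have "l \<inter> m = {}" using l(3) m(3) BC(2) by blast
  ultimately have "line a x \<subseteq> hull (m \<union> {a})"
    using lines_subparallel_trans[OF ax(1,2) axl l(1,2) lm m(1)] by blast
  moreover have "hull (m \<union> {a}) \<subseteq> hull ({a} \<union> C)" using m(3) by (intro hull_mono) blast
  ultimately show ?thesis using ax(3) by blast
qed

lemma subparallel_trans:
  assumes A: "flat X L A" and B: "flat X L B" and C: "flat X L C"
    and AB: "subparallel X L A B" and BC: "subparallel X L B C"
  shows "subparallel X L A C"
  unfolding subparallel_def
proof (intro ballI subsetI)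
  fix a x assume a: "a \<in> A" and x: "x \<in> A"
  have hullB: "A \<subseteq> hull ({a} \<union> B)" using AB a unfolding subparallel_def by blast
  show "x \<in> hull ({a} \<union> C)"
  proof (cases "x = a")
    case True
    then show ?thesis using hull_subset by blast
  next
    case xa: False
    have "B \<noteq> {}" using hullB x xa a hull_singleton flat_subset[OF A] by auto
    then obtain b where b: "b \<in> B" by blast
    consider "A \<subseteq> B" | "B \<subseteq> C" | "A \<inter> B = {}" "B \<inter> C = {}"
      using subparallel_disjoint_or_subset[OF B AB] subparallel_disjoint_or_subset[OF C BC] by blast
    then show ?thesis
    proof cases
      case 1
      then have "B \<subseteq> hull ({a} \<union> C)" using BC a unfolding subparallel_def by blast
      then show ?thesis using 1 x by blast
    next
      case 2
      then show ?thesis using hullB x hull_mono[of "{a} \<union> B" "{a} \<union> C"] by blast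
    next
      case 3
      then show ?thesis using disjoint_subparallel_trans[OF A a x xa B b C AB(1) _ BC] by blast
    qed
  qed
qed

end

theorem theorem6p5p4:
  fixes X :: "'a set" and L :: "'a set set" and A B C :: "'a set"
  assumes "liner X L" and "proaffine X L" and "regular X L"
    and "flat X L A" and "flat X L B" and "flat X L C"
  shows "(subparallel X L A B \<and> subparallel X L B C \<longrightarrow> subparallel X L A C) \<and>
         (parallel X L A B \<and> parallel X L B C \<longrightarrow> parallel X L A C)"
proof -
  interpret proaffine_regular_liner X L
    using assms(1-3) by unfold_locales
  show ?thesis
    using subparallel_trans[OF assms(4-6)] subparallel_trans[OF assms(6,5,4)]
    unfolding parallel_def by blast
qed

end
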